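(* Let $q$ be a prime power, let $n$ be a positive integer with $\gcd(n,q)=1$, and let $t\ge 2$ be an integer. Let $R=\mathbb{F}_{q^2}+u\mathbb{F}_{q^2}+\dots+u^{t-1}\mathbb{F}_{q^2}$ with $u^t=0$. Then there exists a Hermitian self-dual cyclic code of length $n$ over $R$ if and only if $t$ is even.
   Context: $R\cong\mathbb{F}_{q^2}[z]/\langle z^t\rangle$ is a finite chain ring with maximal ideal $\langle u\rangle$ and nilpotency index $t$. The conjugation on $R$ is $\sum_{i}u^ia_i\mapsto\sum_i u^ia_i^q$ ($a_i\in\mathbb{F}_{q^2}$), written $a\mapsto\bar a$. A linear code of length $n$ over $R$ is an $R$-submodule of $R^n$; it is cyclic if it is invariant under $(c_0,\dots,c_{n-1})\mapsto(c_{n-1},c_0,\dots,c_{n-2})$. The Hermitian inner product is $\langle\mathbf u,\mathbf v\rangle_{\mathrm H}=\sum_{i=0}^{n-1}u_i\bar v_i$, $C^{\perp_{\mathrm H}}=\{\mathbf u\in R^n:\langle\mathbf u,\mathbf v\rangle_{\mathrm H}=0\ \forall \mathbf v\in C\}$, and $C$ is Hermitian self-dual if $C=C^{\perp_{\mathrm H}}$. *)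

theory Defs
  imports "HOL-Computational_Algebra.Computational_Algebra"
begin

text \<open>The chain ring R = F[z]/<z^t>, F = F_{q^2}: elements are represented by their
  canonical residues, i.e. polynomials of degree < t; multiplication is reduction mod z^t.\<close>

definition zt :: "nat \<Rightarrow> 'a::field poly" where
  "zt t = [:0, 1:] ^ t"

definition ring_elems :: "nat \<Rightarrow> 'a::field poly set" where
  "ring_elems t = {p. degree p < t}"

definition rmult :: "nat \<Rightarrow> 'a::field poly \<Rightarrow> 'a poly \<Rightarrow> 'a poly" where
  "rmult t a b = (a * b) mod zt t"

definition conj_R :: "nat \<Rightarrow> 'a::field poly \<Rightarrow> 'a poly" where
  "conj_R q a = map_poly (\<lambda>x. x ^ q) a"

definition Rvecs :: "nat \<Rightarrow> nat \<Rightarrow> (nat \<Rightarrow> 'a::field poly) set" where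
  "Rvecs n t = {v. (\<forall>i<n. v i \<in> ring_elems t) \<and> (\<forall>i\<ge>n. v i = 0)}"

definition linear_code :: "nat \<Rightarrow> nat \<Rightarrow> (nat \<Rightarrow> 'a::field poly) set \<Rightarrow> bool" where
  "linear_code n t C \<longleftrightarrow> C \<subseteq> Rvecs n t \<and> (\<lambda>i. 0) \<in> C \<and>
     (\<forall>x\<in>C. \<forall>y\<in>C. (\<lambda>i. x i + y i) \<in> C) \<and>
     (\<forall>r\<in>ring_elems t. \<forall>x\<in>C. (\<lambda>i. rmult t r (x i)) \<in> C)"

definition cyc_shift :: "nat \<Rightarrow> (nat \<Rightarrow> 'b::zero) \<Rightarrow> nat \<Rightarrow> 'b" where
  "cyc_shift n v i = (if i < n then v ((i + n - 1) mod n) else 0)"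

definition cyclic_code :: "nat \<Rightarrow> nat \<Rightarrow> (nat \<Rightarrow> 'a::field poly) set \<Rightarrow> bool" where
  "cyclic_code n t C \<longleftrightarrow> linear_code n t C \<and> (\<forall>x\<in>C. cyc_shift n x \<in> C)"

definition herm_ip :: "nat \<Rightarrow> nat \<Rightarrow> nat \<Rightarrow> (nat \<Rightarrow> 'a::field poly) \<Rightarrow> (nat \<Rightarrow> 'a poly) \<Rightarrow> 'a poly" where
  "herm_ip q n t u v = (\<Sum>i<n. rmult t (u i) (conj_R q (v i)))"

definition herm_dual :: "nat \<Rightarrow> nat \<Rightarrow> nat \<Rightarrow> (nat \<Rightarrow> 'a::field poly) set \<Rightarrow> (nat \<Rightarrow> 'a poly) set" where
  "herm_dual q n t C = {u \<in> Rvecs n t. \<forall>v\<in>C. herm_ip q n t u v = 0}"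

definition herm_self_dual :: "nat \<Rightarrow> nat \<Rightarrow> nat \<Rightarrow> (nat \<Rightarrow> 'a::field poly) set \<Rightarrow> bool" where
  "herm_self_dual q n t C \<longleftrightarrow> C = herm_dual q n t C"

end

theory Submission
  imports Defs "HOL-Number_Theory.Residues"
begin

text \<open>Let \<open>v\<close> be the \<open>u\<close>-adic valuation on \<open>R\<close>. Conjugation preserves it, so
  \<open>v(a \<cdot> conj a) = 2 v(a)\<close>.
  If \<open>t = 2h\<close>, the code \<open>u\<^sup>h R\<^sup>n\<close> is cyclic and its Hermitian dual is
  \<open>u\<^bsup>t-h\<^esup> R\<^sup>n\<close>, i.e. itself.
  If \<open>t = 2m + 1\<close> and \<open>C\<close> is self-dual and cyclic, then for every \<open>c \<in> C\<close> the sum of the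
  cyclic shifts of \<open>c\<close> is the constant vector with entry \<open>\<sigma> = \<Sum> c\<^sub>i\<close>; it is
  self-orthogonal, so \<open>n \<sigma> conj \<sigma> = 0\<close>, and as \<open>n\<close> is a unit, \<open>v(\<sigma>) \<ge> m + 1\<close>. Hence the
  constant vector with entry \<open>u\<^sup>m\<close> is orthogonal to \<open>C\<close>, so it lies in \<open>C\<close>; but its
  coordinate sum \<open>n u\<^sup>m\<close> has valuation \<open>m\<close>.\<close>

hide_const (open) UnivPoly.coeff UnivPoly.monom Coset.order

lemma zt_eq_monom: "zt t = (monom 1 t :: 'a::field poly)"
  by (simp add: zt_def monom_altdef)

lemma rmult_eq_0_iff: "rmult t a b = 0 \<longleftrightarrow> monom 1 t dvd a * b"
  by (simp add: rmult_def zt_eq_monom mod_eq_0_iff_dvd)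

lemma poly_mod_sum: "(\<Sum>i\<in>A. f i) mod z = (\<Sum>i\<in>A. f i mod (z::'a::field poly))"
  by (induction A rule: infinite_finite_induct) (simp_all add: poly_mod_add_left)

lemma CHAR_eq_of_card_eq_prime_power:
  assumes "prime p" "e > 0" "card (UNIV :: 'a::{field,finite} set) = p ^ e"
  shows "CHAR('a) = p"
proof -
  have "prime CHAR('a)"
    by (intro prime_CHAR_semidom finite_imp_CHAR_pos) simp
  moreover have "CHAR('a) dvd p ^ e"
    using CHAR_dvd_CARD[where 'a='a] assms(3) by simp
  ultimately show ?thesis
    using assms(1) prime_dvd_power primes_dvd_imp_eq by blast
qed

lemma of_nat_neq_0_if_coprime_CHAR:
  assumes "coprime n CHAR('a::field)"
  shows "of_nat n \<noteq> (0::'a)"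
proof
  assume "of_nat n = (0::'a)"
  then have "CHAR('a) dvd n"
    by (simp add: of_nat_eq_0_iff_char_dvd)
  then have "is_unit CHAR('a)"
    using coprime_common_divisor[OF assms] by simp
  then show False by simp
qed

lemma coeff_conj_R: "q > 0 \<Longrightarrow> coeff (conj_R q p) i = coeff p i ^ q"
  by (simp add: conj_R_def coeff_map_poly)

lemma conj_R_eq_0_iff: "q > 0 \<Longrightarrow> conj_R q p = 0 \<longleftrightarrow> (p::'a::field poly) = 0"
  by (auto simp: poly_eq_iff coeff_conj_R)

lemma conj_R_0 [simp]: "conj_R q 0 = 0"
  by (simp add: conj_R_def)

lemma conj_R_monom_1: "q > 0 \<Longrightarrow> conj_R q (monom (1::'a::field) k) = monom 1 k"
  by (simp add: conj_R_def map_poly_monom)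

lemma monom_1_dvd_conj_R_iff:
  "q > 0 \<Longrightarrow> monom 1 k dvd conj_R q p \<longleftrightarrow> monom 1 k dvd (p::'a::field poly)"
  by (simp add: monom_1_dvd_iff' coeff_conj_R)

lemma order_0_conj_R:
  assumes "q > 0" "p \<noteq> 0"
  shows "order 0 (conj_R q p) = order 0 (p::'a::field poly)"
proof -
  have "k \<le> order 0 (conj_R q p) \<longleftrightarrow> k \<le> order 0 p" for k
    using assms monom_1_dvd_conj_R_iff by (simp add: conj_R_eq_0_iff flip: monom_1_dvd_iff)
  then show ?thesis by (meson le_antisym order_refl)
qed

lemma monom_1_dvd_mult_conj_R_iff:
  assumes "q > 0"
  shows "monom 1 k dvd p * conj_R q p \<longleftrightarrow> monom 1 ((k + 1) div 2) dvd (p::'a::field poly)"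
proof (cases "p = 0")
  case False
  then have "order 0 (p * conj_R q p) = 2 * order 0 p"
    using assms by (simp add: order_mult order_0_conj_R conj_R_eq_0_iff)
  then show ?thesis
    using assms False by (simp add: monom_1_dvd_iff conj_R_eq_0_iff) linarith
qed simp

lemma conj_R_sum:
  assumes "prime CHAR('a::field)" "q = CHAR('a) ^ k"
  shows "conj_R q (\<Sum>i\<in>A. f i) = (\<Sum>i\<in>A. conj_R q (f i :: 'a poly))"
proof -
  have "q > 0" using assms by (simp add: prime_gt_0_nat)
  then show ?thesis
    by (intro poly_eqI) (simp add: coeff_conj_R coeff_sum freshmans_dream_sum'[OF assms])
qed

lemma funpow_cyc_shift_apply:
  assumes "k \<le> n" "i < n"
  shows "(cyc_shift n ^^ k) v i = v ((i + n - k) mod n)"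
  using assms
proof (induction k arbitrary: i)
  case (Suc k)
  have "((i + n - 1) mod n + n - k) mod n = ((i + n - 1) mod n + (n - k)) mod n"
    using Suc.prems by simp
  also have "\<dots> = (i + n - Suc k + n) mod n"
    unfolding mod_add_left_eq using Suc.prems by (simp add: algebra_simps)
  also have "\<dots> = (i + n - Suc k) mod n"
    by (rule mod_add_self2)
  finally show ?case
    using Suc by (simp add: cyc_shift_def)
qed simp

lemma reflect_mod_involution:
  "i < n \<Longrightarrow> k < (n::nat) \<Longrightarrow> (i + n - (i + n - k) mod n) mod n = k"
  by (cases "k \<le> i") (auto simp: le_mod_geq mod_if)

lemma sum_reflect_mod:
  "i < (n::nat) \<Longrightarrow> (\<Sum>k<n. v ((i + n - k) mod n)) = (\<Sum>j<n. v j :: 'b::comm_monoid_add)"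
  by (rule sum.reindex_bij_witness[where i="\<lambda>k. (i + n - k) mod n" and j="\<lambda>k. (i + n - k) mod n"])
     (auto simp: reflect_mod_involution)

lemma cyclic_code_const_sum_mem:
  assumes cyc: "cyclic_code n t C" and "v \<in> C" "n > 0"
  shows "(\<lambda>i. if i < n then \<Sum>j<n. v j else 0) \<in> C"
proof -
  have lin: "linear_code n t C" using cyc by (simp add: cyclic_code_def)
  have shifts: "(cyc_shift n ^^ k) v \<in> C" for k
    by (induction k) (use \<open>v \<in> C\<close> cyc in \<open>auto simp: cyclic_code_def\<close>)
  have partial_sums: "(\<lambda>i. \<Sum>k<m. (cyc_shift n ^^ k) v i) \<in> C" for m
    by (induction m) (use lin shifts in \<open>auto simp: linear_code_def\<close>)
  have "(\<lambda>i. \<Sum>k<n. (cyc_shift n ^^ k) v i) \<in> Rvecs n t"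
    using partial_sums lin by (auto simp: linear_code_def)
  then have "(\<lambda>i. \<Sum>k<n. (cyc_shift n ^^ k) v i) = (\<lambda>i. if i < n then \<Sum>j<n. v j else 0)"
    by (intro ext) (simp add: Rvecs_def funpow_cyc_shift_apply sum_reflect_mod)
  then show ?thesis using partial_sums[of n] by simp
qed

definition u_power_code :: "nat \<Rightarrow> nat \<Rightarrow> nat \<Rightarrow> (nat \<Rightarrow> 'a::field poly) set" where
  "u_power_code n t h = {v \<in> Rvecs n t. \<forall>i. monom 1 h dvd v i}"

lemma cyclic_code_u_power_code:
  assumes "h < t"
  shows "cyclic_code n t (u_power_code n t h :: (nat \<Rightarrow> 'a::field poly) set)"
proof -
  have "monom (1::'a) h dvd zt t"
    using assms by (simp add: zt_eq_monom monom_1_dvd_iff')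
  moreover have "degree ((x::'a poly) mod zt t) < t" if "t > 0" for x
    using degree_mod_less[of "zt t" x] that by (auto simp: zt_eq_monom degree_monom_eq)
  ultimately show ?thesis
    using assms
    by (auto simp: cyclic_code_def linear_code_def u_power_code_def Rvecs_def ring_elems_def
        cyc_shift_def rmult_def intro: le_less_trans[OF degree_add_le_max] dvd_mod)
qed

lemma herm_dual_u_power_code:
  assumes "q > 0" "h < t"
  shows "herm_dual q n t (u_power_code n t h) =
    (u_power_code n t (t - h) :: (nat \<Rightarrow> 'a::field poly) set)"
  (is "?dual = ?code")
proof (intro equalityI subsetI)
  fix u assume u: "u \<in> ?dual"
  have "monom 1 (t - h) dvd u i" for i
  proof (cases "i < n")
    case False
    then show ?thesis using u by (simp add: herm_dual_def Rvecs_def)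
  next
    case True
    define e where "e = (\<lambda>j. if j = i then monom (1::'a) h else 0)"
    have "e \<in> u_power_code n t h"
      using True assms
      by (auto simp: e_def u_power_code_def Rvecs_def ring_elems_def degree_monom_eq)
    with u have "herm_ip q n t u e = 0"
      by (simp add: herm_dual_def)
    moreover have "herm_ip q n t u e = rmult t (u i) (monom 1 h)"
      using True assms
      by (simp add: herm_ip_def e_def conj_R_monom_1 if_distrib rmult_def cong: if_cong)
    ultimately have "monom 1 (t - h) * monom 1 h dvd u i * monom 1 h"
      using assms by (simp add: rmult_eq_0_iff mult_monom)
    then show ?thesis by simp
  qed
  then show "u \<in> ?code"
    using u by (auto simp: herm_dual_def u_power_code_def Rvecs_def)
next
  fix u assume u: "u \<in> ?code"
  have "rmult t (u i) (conj_R q (v i)) = 0" if "v \<in> u_power_code n t h" for v i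
  proof -
    have "monom 1 (t - h) * monom 1 h dvd u i * conj_R q (v i)"
      using u that assms
      by (intro mult_dvd_mono) (simp_all add: u_power_code_def monom_1_dvd_conj_R_iff)
    then show ?thesis
      using assms by (simp add: rmult_eq_0_iff mult_monom)
  qed
  then show "u \<in> ?dual"
    using u by (simp add: herm_dual_def herm_ip_def u_power_code_def)
qed

lemma self_orthogonal_cyclic_code_sum_divisible:
  fixes C :: "(nat \<Rightarrow> 'a::field poly) set"
  assumes "cyclic_code n t C" "C \<subseteq> herm_dual q n t C" "v \<in> C"
    and "q > 0" "n > 0" "of_nat n \<noteq> (0::'a)"
  shows "monom 1 ((t + 1) div 2) dvd (\<Sum>j<n. v j)"
proof -
  define \<sigma> where "\<sigma> = (\<Sum>j<n. v j)"
  define w where "w = (\<lambda>i. if i < n then \<sigma> else 0)"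
  have "w \<in> C"
    unfolding w_def \<sigma>_def using assms by (intro cyclic_code_const_sum_mem)
  then have "herm_ip q n t w w = 0"
    using assms(2) by (auto simp: herm_dual_def)
  moreover have "herm_ip q n t w w = of_nat n * rmult t \<sigma> (conj_R q \<sigma>)"
    by (simp add: herm_ip_def w_def)
  ultimately have "rmult t \<sigma> (conj_R q \<sigma>) = 0"
    using assms(6) by (simp add: of_nat_poly)
  then show ?thesis
    using assms(4) by (simp add: rmult_eq_0_iff monom_1_dvd_mult_conj_R_iff \<sigma>_def)
qed

lemma no_self_dual_cyclic_code_odd:
  fixes C :: "(nat \<Rightarrow> 'a::field poly) set"
  assumes "prime CHAR('a)" "q = CHAR('a) ^ k"
    and "n > 0" "of_nat n \<noteq> (0::'a)" "odd t"
    and cyc: "cyclic_code n t C" and self_dual: "herm_self_dual q n t C"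
  shows False
proof -
  define m where "m = t div 2"
  have t: "t = 2 * m + 1" "(t + 1) div 2 = m + 1"
    using \<open>odd t\<close> by (simp_all add: m_def)
  have "q > 0" using assms(1,2) by (simp add: prime_gt_0_nat)
  have "C \<subseteq> herm_dual q n t C"
    using self_dual by (simp add: herm_self_dual_def)
  note sum_divisible =
    self_orthogonal_cyclic_code_sum_divisible[OF cyc this _ \<open>q > 0\<close> assms(3,4)]
  define w where "w = (\<lambda>i. if i < n then monom (1::'a) m else 0)"
  have "herm_ip q n t w v = 0" if "v \<in> C" for v
  proof -
    have "monom 1 (m + 1) dvd conj_R q (\<Sum>j<n. v j)"
      using sum_divisible[OF \<open>v \<in> C\<close>] t \<open>q > 0\<close> by (simp add: monom_1_dvd_conj_R_iff)
    then obtain r where r: "conj_R q (\<Sum>j<n. v j) = monom 1 (m + 1) * r"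
      by (elim dvdE)
    have "herm_ip q n t w v = rmult t (monom 1 m) (conj_R q (\<Sum>j<n. v j))"
      by (simp add: herm_ip_def rmult_def w_def conj_R_sum[OF assms(1,2)] sum_distrib_left
          flip: poly_mod_sum)
    also have "\<dots> = 0"
      by (simp add: r rmult_eq_0_iff mult.assoc[symmetric] mult_monom t mult_2)
    finally show ?thesis .
  qed
  moreover have "w \<in> Rvecs n t"
    using t by (simp add: w_def Rvecs_def ring_elems_def degree_monom_eq)
  ultimately have "w \<in> C"
    using self_dual by (auto simp: herm_self_dual_def herm_dual_def)
  then have "monom 1 (m + 1) dvd of_nat n * monom (1::'a) m"
    using sum_divisible t by (fastforce simp: w_def)
  then show False
    using assms(4) by (auto simp: monom_1_dvd_iff' of_nat_poly)
qed

theorem theorem3p8: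
  fixes q n t :: nat
  assumes "\<exists>p k. prime p \<and> k > 0 \<and> q = p ^ k"
    and "card (UNIV :: ('a::{field,finite}) set) = q ^ 2"
    and "n > 0" and "coprime n q" and "t \<ge> 2"
  shows "(\<exists>C :: (nat \<Rightarrow> 'a poly) set. cyclic_code n t C \<and> herm_self_dual q n t C)
         \<longleftrightarrow> even t"
proof
  obtain p k where p: "prime p" "k > 0" "q = p ^ k" using assms(1) by blast
  then have char: "CHAR('a) = p"
    using assms(2)
    by (intro CHAR_eq_of_card_eq_prime_power[of p "k * 2"]) (simp_all add: power_mult)
  have "of_nat n \<noteq> (0::'a)"
    using assms(4) p char by (intro of_nat_neq_0_if_coprime_CHAR) simp
  then show "even t" if "\<exists>C :: (nat \<Rightarrow> 'a poly) set. cyclic_code n t C \<and> herm_self_dual q n t C"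
    using that no_self_dual_cyclic_code_odd[of q k n t] p char assms(3) by blast
next
  assume "even t"
  have "q > 0" using assms(1) prime_gt_0_nat by fastforce
  have "t div 2 < t" "t - t div 2 = t div 2" using \<open>even t\<close> assms(5) by auto
  then have "cyclic_code n t (u_power_code n t (t div 2) :: (nat \<Rightarrow> 'a poly) set)"
    and "herm_self_dual q n t (u_power_code n t (t div 2) :: (nat \<Rightarrow> 'a poly) set)"
    using \<open>q > 0\<close>
    by (simp_all add: cyclic_code_u_power_code herm_self_dual_def herm_dual_u_power_code)
  then show "\<exists>C :: (nat \<Rightarrow> 'a poly) set. cyclic_code n t C \<and> herm_self_dual q n t C"
    by blast
qed

end
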